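(* In the protocol IT-HS described in the context, with $f<\frac{n}{3}$ Byzantine parties, if two nonfaulty parties send messages $\langle tag,val,v\rangle$ and $\langle tag',val',v\rangle$ (for the same view $v$) with $tag,tag'\in\{key1,key2,key3,lock\}$, then $val=val'$.
   Context: Model. $n$ parties with inputs $x_i$; up to $f$ Byzantine (arbitrary behaviour), the rest nonfaulty; authenticated point-to-point channels; partial synchrony: after an unknown time GST every message arrives within known $\Delta$ time and clocks are synchronized, before GST delays are arbitrary but finite. Protocol IT-HS (party $i$). Variables: $lock\gets 0$, $lock\_val\gets x_i$; $key3\gets 0$, $key3\_val\gets x_i$; $key2\gets 0$, $key2\_val\gets x_i$, $prev\_key2\gets -1$; $key1\gets 0$, $key1\_val\gets x_i$, $prev\_key1\gets -1$; $view\gets 0$; $highest\_request[j]\gets 0$, $highest\_abort[j]\gets 0$ for $j\in[n]$. "Send-upon-join $m$": for each $j$, send $m$ to $j$ as soon as $highest\_request[j]$ equals the current view. Background: (B1) on $\langle request,v\rangle$ from $j$, $highest\_request[j]\gets\max(highest\_request[j],v)$. (B2) on $\langle done,val\rangle$ from $f+1$ parties with the same $val$: if no $done$ sent yet, send $\langle done,val\rangle$ to all. (B3) on $\langle done,val\rangle$ from $n-f$ parties with the same $val$: decide $val$, terminate. (B4) on $\langle abort,v\rangle$ from $j$ with $highest\_abort[j]<v$: $highest\_abort[j]\gets v$; $u\gets$ the $(f+1)$-th largest entry of $highest\_abort$; if $u>highest\_abort[i]$ send $\langle abort,u\rangle$ to all and set $highest\_abort[i]\gets u$; $w\gets$ the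 $(n-f)$-th largest entry; if $w\ge view$ set $view\gets w+1$. Views: for each value $v$ of $view$, while $view=v$: fresh per-view state; after $11\Delta$ local time send $\langle abort,v\rangle$ to all; ignore other views' messages except $abort$, $done$, $request$; primary $p=(v\bmod n)+1$. View change: send $\langle request,v\rangle$ to all; when $highest\_request[p]=v$ send $\langle suggest,key3,key3\_val,key2,key2\_val,prev\_key2,v\rangle$ to $p$; send-upon-join $\langle proof,key1,key1\_val,prev\_key1,v\rangle$. If $i=p$: upon first $\langle suggest,k3,v3,k2,v2,pk2,v\rangle$ from a party, if $pk2<k2<v$ add $(k2,v2,pk2)$ to $key2\_proofs$; if $k3=0$ add $(k3,v3)$ to $suggestions$; else if $k3<v$ add $(k3,v3)$ as soon as at least $f+1$ triples $(k,w,pk)\in key2\_proofs$ satisfy $k3\le pk$ or ($k3\le k$ and $w=v3$); once $|suggestions|\ge n-f$, send-upon-join $\langle propose,k,w,v\rangle$ for $(k,w)\in suggestions$ with maximal $k$. Message processing: upon first $\langle proof,k1,v1,pk1,v\rangle$ from a party, if $v>k1>pk1$ add $(k1,v1,pk1)$ to $proofs$. Upon first $\langle propose,key,val,v\rangle$ from $p$: if $lock=0$ or $val=lock\_val$, send-upon-join $\langle echo,val,v\rangle$; else if $v>key\ge lock$, then once at least $f+1$ triples $(k,w,pk)\in proofs$ satisfy $lock\le pk$ or ($lock\le k$ and $w\ne lock\_val$), send-upon-join $\langle echo,val,v\rangle$. Upon $\langle echo,val,v\rangle$ from $n-f$ parties with the same $val$: send-upon-join $\langle key1,val,v\rangle$;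 if $key1\_val\ne val$ then $prev\_key1\gets key1$, $key1\_val\gets val$; $key1\gets v$. Upon $\langle key1,val,v\rangle$ from $n-f$ parties (same $val$): send-upon-join $\langle key2,val,v\rangle$; if $key2\_val\ne val$ then $prev\_key2\gets key2$, $key2\_val\gets val$; $key2\gets v$. Upon $\langle key2,val,v\rangle$ from $n-f$ (same $val$): send-upon-join $\langle key3,val,v\rangle$; $key3\gets v$, $key3\_val\gets val$. Upon $\langle key3,val,v\rangle$ from $n-f$ (same $val$): send-upon-join $\langle lock,val,v\rangle$; $lock\gets v$, $lock\_val\gets val$. Upon $\langle lock,val,v\rangle$ from $n-f$ (same $val$): if no $done$ sent yet, send $\langle done,val\rangle$ to all. *)

theory Defs
  imports Main
begin

text \<open>Parties are 1..n.  Views and keys are naturals; the prev_key fields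
  (initially -1) are integers.\<close>

datatype 'v msg =
    MRequest nat
  | MDone 'v
  | MAbort nat
  | MSuggest nat 'v nat 'v int nat   \<comment> \<open>key3, key3_val, key2, key2_val, prev_key2, view\<close>
  | MProof nat 'v int nat            \<comment> \<open>key1, key1_val, prev_key1, view\<close>
  | MPropose nat 'v nat              \<comment> \<open>key, val, view\<close>
  | MEcho 'v nat
  | MKey1 'v nat
  | MKey2 'v nat
  | MKey3 'v nat
  | MLock 'v nat

record 'v lst =
  view :: nat
  lock :: nat
  lock_val :: 'v
  key3 :: nat
  key3_val :: 'v
  key2 :: nat
  key2_val :: 'v
  prev_key2 :: int
  key1 :: nat
  key1_val :: 'v
  prev_key1 :: int
  hreq :: "nat \<Rightarrow> nat"
  habort :: "nat \<Rightarrow> nat"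
  done_rcvd :: "(nat \<times> 'v) set"
  done_sent :: bool
  decided :: "'v option"
  \<comment> \<open>per-view state (reset on every view change)\<close>
  abort_sent :: bool
  suggest_sent :: bool
  queued :: "'v msg set"            \<comment> \<open>messages to be sent with send-upon-join\<close>
  sent_to :: "(nat \<times> 'v msg) set"  \<comment> \<open>send-upon-join deliveries already done\<close>
  rcvd :: "(nat \<times> 'v msg) set"    \<comment> \<open>echo/key/lock messages of the current view\<close>
  suggest_from :: "nat set"
  key2_proofs :: "nat \<Rightarrow> (nat \<times> 'v \<times> int) option"
  pend_sugg :: "nat \<Rightarrow> (nat \<times> 'v) option"
  suggestions :: "nat \<Rightarrow> (nat \<times> 'v) option"
  proposed :: bool
  proof_from :: "nat set"
  proofs :: "nat \<Rightarrow> (nat \<times> 'v \<times> int) option"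
  proposal :: "(nat \<times> 'v) option"
  awaiting :: "'v option"

definition parties :: "nat \<Rightarrow> nat set" where
  "parties n = {1..n}"

definition prim :: "nat \<Rightarrow> nat \<Rightarrow> nat" where
  "prim n v = v mod n + 1"

definition to_all :: "nat \<Rightarrow> 'v msg \<Rightarrow> (nat \<times> 'v msg) set" where
  "to_all n m = (\<lambda>r. (r, m)) ` parties n"

definition kth_largest :: "(nat \<Rightarrow> nat) \<Rightarrow> nat \<Rightarrow> nat \<Rightarrow> nat" where
  "kth_largest h n k = rev (sort (map h [1..<Suc n])) ! (k - 1)"

definition enter_view :: "nat \<Rightarrow> 'v lst \<Rightarrow> nat \<Rightarrow> 'v lst \<times> (nat \<times> 'v msg) set" where
  "enter_view n s w =
    (s\<lparr>view := w, abort_sent := False, suggest_sent := False,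
       queued := {MProof (key1 s) (key1_val s) (prev_key1 s) w}, sent_to := {}, rcvd := {},
       suggest_from := {}, key2_proofs := (\<lambda>_. None), pend_sugg := (\<lambda>_. None),
       suggestions := (\<lambda>_. None), proposed := False, proof_from := {},
       proofs := (\<lambda>_. None), proposal := None, awaiting := None\<rparr>,
     to_all n (MRequest w))"

definition init_lst :: "nat \<Rightarrow> (nat \<Rightarrow> 'v) \<Rightarrow> nat \<Rightarrow> 'v lst" where
  "init_lst n x i = fst (enter_view n
     \<lparr>view = 0, lock = 0, lock_val = x i, key3 = 0, key3_val = x i,
      key2 = 0, key2_val = x i, prev_key2 = -1, key1 = 0, key1_val = x i, prev_key1 = -1,
      hreq = (\<lambda>_. 0), habort = (\<lambda>_. 0), done_rcvd = {}, done_sent = False, decided = None,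
      abort_sent = False, suggest_sent = False, queued = {}, sent_to = {}, rcvd = {},
      suggest_from = {}, key2_proofs = (\<lambda>_. None), pend_sugg = (\<lambda>_. None),
      suggestions = (\<lambda>_. None), proposed = False, proof_from = {}, proofs = (\<lambda>_. None),
      proposal = None, awaiting = None\<rparr> 0)"

definition abort_rule :: "nat \<Rightarrow> nat \<Rightarrow> nat \<Rightarrow> nat \<Rightarrow> nat \<Rightarrow> 'v lst \<Rightarrow> 'v lst \<times> (nat \<times> 'v msg) set" where
  "abort_rule n f i j v s =
    (if habort s j < v then
       (let s1 = s\<lparr>habort := (habort s)(j := v)\<rparr>;
            u = kth_largest (habort s1) n (f + 1);
            s2 = (if u > habort s1 i then s1\<lparr>habort := (habort s1)(i := u)\<rparr> else s1);
            o1 = (if u > habort s1 i then to_all n (MAbort u) else {});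
            w = kth_largest (habort s2) n (n - f)
        in if w \<ge> view s2 then (fst (enter_view n s2 (w + 1)), o1 \<union> snd (enter_view n s2 (w + 1)))
           else (s2, o1))
     else (s, {}))"

definition recv :: "nat \<Rightarrow> nat \<Rightarrow> nat \<Rightarrow> nat \<Rightarrow> 'v msg \<Rightarrow> 'v lst \<Rightarrow> 'v lst \<times> (nat \<times> 'v msg) set" where
  "recv n f i j m s = (case m of
      MRequest v \<Rightarrow> (s\<lparr>hreq := (hreq s)(j := max (hreq s j) v)\<rparr>, {})
    | MDone val \<Rightarrow> (s\<lparr>done_rcvd := insert (j, val) (done_rcvd s)\<rparr>, {})
    | MAbort v \<Rightarrow> abort_rule n f i j v s
    | MSuggest k3 v3 k2 v2 pk2 v \<Rightarrow>
        (if v = view s \<and> i = prim n v \<and> j \<notin> suggest_from s then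
           (let s1 = s\<lparr>suggest_from := insert j (suggest_from s)\<rparr>;
                s2 = (if pk2 < int k2 \<and> k2 < v
                      then s1\<lparr>key2_proofs := (key2_proofs s1)(j := Some (k2, v2, pk2))\<rparr> else s1);
                s3 = (if k3 = 0 then s2\<lparr>suggestions := (suggestions s2)(j := Some (k3, v3))\<rparr>
                      else if k3 < v then s2\<lparr>pend_sugg := (pend_sugg s2)(j := Some (k3, v3))\<rparr>
                      else s2)
            in (s3, {}))
         else (s, {}))
    | MProof k1 v1 pk1 v \<Rightarrow>
        (if v = view s \<and> j \<notin> proof_from s then
           (let s1 = s\<lparr>proof_from := insert j (proof_from s)\<rparr>
            in (if k1 < v \<and> pk1 < int k1
                then s1\<lparr>proofs := (proofs s1)(j := Some (k1, v1, pk1))\<rparr> else s1, {}))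
         else (s, {}))
    | MPropose k w v \<Rightarrow>
        (if v = view s \<and> j = prim n v \<and> proposal s = None then
           (let s1 = s\<lparr>proposal := Some (k, w)\<rparr>
            in (if lock s = 0 \<or> w = lock_val s then s1\<lparr>queued := insert (MEcho w v) (queued s1)\<rparr>
                else if k < v \<and> lock s \<le> k then s1\<lparr>awaiting := Some w\<rparr>
                else s1, {}))
         else (s, {}))
    | MEcho val v \<Rightarrow> (if v = view s then (s\<lparr>rcvd := insert (j, m) (rcvd s)\<rparr>, {}) else (s, {}))
    | MKey1 val v \<Rightarrow> (if v = view s then (s\<lparr>rcvd := insert (j, m) (rcvd s)\<rparr>, {}) else (s, {}))
    | MKey2 val v \<Rightarrow> (if v = view s then (s\<lparr>rcvd := insert (j, m) (rcvd s)\<rparr>, {}) else (s, {}))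
    | MKey3 val v \<Rightarrow> (if v = view s then (s\<lparr>rcvd := insert (j, m) (rcvd s)\<rparr>, {}) else (s, {}))
    | MLock val v \<Rightarrow> (if v = view s then (s\<lparr>rcvd := insert (j, m) (rcvd s)\<rparr>, {}) else (s, {})))"

definition cnt :: "nat \<Rightarrow> 'v lst \<Rightarrow> 'v msg \<Rightarrow> nat" where
  "cnt n s m = card {j \<in> parties n. (j, m) \<in> rcvd s}"

text \<open>Spontaneous / guarded local steps of a nonfaulty (non-terminated) party i:
  lstep n f i s s' out, where out is the set of (receiver, message) pairs sent.\<close>
inductive lstep :: "nat \<Rightarrow> nat \<Rightarrow> nat \<Rightarrow> 'v lst \<Rightarrow> 'v lst \<Rightarrow> (nat \<times> 'v msg) set \<Rightarrow> bool"
  for n f i where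
  timer: "\<lbrakk>decided s = None; \<not> abort_sent s\<rbrakk> \<Longrightarrow>
     lstep n f i s (s\<lparr>abort_sent := True\<rparr>) (to_all n (MAbort (view s)))"
| suggest: "\<lbrakk>decided s = None; \<not> suggest_sent s; hreq s (prim n (view s)) = view s\<rbrakk> \<Longrightarrow>
     lstep n f i s (s\<lparr>suggest_sent := True\<rparr>)
       {(prim n (view s), MSuggest (key3 s) (key3_val s) (key2 s) (key2_val s) (prev_key2 s) (view s))}"
| send_join: "\<lbrakk>decided s = None; m \<in> queued s; j \<in> parties n; (j, m) \<notin> sent_to s;
      hreq s j = view s\<rbrakk> \<Longrightarrow>
     lstep n f i s (s\<lparr>sent_to := insert (j, m) (sent_to s)\<rparr>) {(j, m)}"
| add_sugg: "\<lbrakk>decided s = None; pend_sugg s j = Some (k3, v3); suggestions s j = None;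
      card {l \<in> parties n. \<exists>k w pk. key2_proofs s l = Some (k, w, pk) \<and>
              (int k3 \<le> pk \<or> (k3 \<le> k \<and> w = v3))} \<ge> f + 1\<rbrakk> \<Longrightarrow>
     lstep n f i s (s\<lparr>suggestions := (suggestions s)(j := Some (k3, v3))\<rparr>) {}"
| propose: "\<lbrakk>decided s = None; i = prim n (view s); \<not> proposed s;
      card {l \<in> parties n. suggestions s l \<noteq> None} \<ge> n - f;
      suggestions s j = Some (k, w);
      \<forall>l k' w'. suggestions s l = Some (k', w') \<longrightarrow> k' \<le> k\<rbrakk> \<Longrightarrow>
     lstep n f i s (s\<lparr>proposed := True, queued := insert (MPropose k w (view s)) (queued s)\<rparr>) {}"
| echo_await: "\<lbrakk>decided s = None; awaiting s = Some w;
      card {l \<in> parties n. \<exists>k w' pk. proofs s l = Some (k, w', pk) \<and>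
              (int (lock s) \<le> pk \<or> (lock s \<le> k \<and> w' \<noteq> lock_val s))} \<ge> f + 1\<rbrakk> \<Longrightarrow>
     lstep n f i s (s\<lparr>awaiting := None, queued := insert (MEcho w (view s)) (queued s)\<rparr>) {}"
| key1: "\<lbrakk>decided s = None; cnt n s (MEcho val (view s)) \<ge> n - f;
      MKey1 val (view s) \<notin> queued s\<rbrakk> \<Longrightarrow>
     lstep n f i s (s\<lparr>queued := insert (MKey1 val (view s)) (queued s),
                      prev_key1 := (if key1_val s \<noteq> val then int (key1 s) else prev_key1 s),
                      key1_val := val, key1 := view s\<rparr>) {}"
| key2: "\<lbrakk>decided s = None; cnt n s (MKey1 val (view s)) \<ge> n - f;
      MKey2 val (view s) \<notin> queued s\<rbrakk> \<Longrightarrow>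
     lstep n f i s (s\<lparr>queued := insert (MKey2 val (view s)) (queued s),
                      prev_key2 := (if key2_val s \<noteq> val then int (key2 s) else prev_key2 s),
                      key2_val := val, key2 := view s\<rparr>) {}"
| key3: "\<lbrakk>decided s = None; cnt n s (MKey2 val (view s)) \<ge> n - f;
      MKey3 val (view s) \<notin> queued s\<rbrakk> \<Longrightarrow>
     lstep n f i s (s\<lparr>queued := insert (MKey3 val (view s)) (queued s),
                      key3_val := val, key3 := view s\<rparr>) {}"
| lock: "\<lbrakk>decided s = None; cnt n s (MKey3 val (view s)) \<ge> n - f;
      MLock val (view s) \<notin> queued s\<rbrakk> \<Longrightarrow>
     lstep n f i s (s\<lparr>queued := insert (MLock val (view s)) (queued s),
                      lock_val := val, lock := view s\<rparr>) {}"
| done_lock: "\<lbrakk>decided s = None; cnt n s (MLock val (view s)) \<ge> n - f; \<not> done_sent s\<rbrakk> \<Longrightarrow>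
     lstep n f i s (s\<lparr>done_sent := True\<rparr>) (to_all n (MDone val))"
| done_amp: "\<lbrakk>decided s = None; card {j \<in> parties n. (j, val) \<in> done_rcvd s} \<ge> f + 1;
      \<not> done_sent s\<rbrakk> \<Longrightarrow>
     lstep n f i s (s\<lparr>done_sent := True\<rparr>) (to_all n (MDone val))"
| decide: "\<lbrakk>decided s = None; card {j \<in> parties n. (j, val) \<in> done_rcvd s} \<ge> n - f\<rbrakk> \<Longrightarrow>
     lstep n f i s (s\<lparr>decided := Some val\<rparr>) {}"

record 'v gst =
  loc :: "nat \<Rightarrow> 'v lst"
  net :: "(nat \<times> nat \<times> 'v msg) set"   \<comment> \<open>all messages ever sent: (sender, receiver, msg)\<close>
  dlv :: "(nat \<times> nat \<times> 'v msg) set"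

definition ginit :: "nat \<Rightarrow> nat set \<Rightarrow> (nat \<Rightarrow> 'v) \<Rightarrow> 'v gst" where
  "ginit n F x = \<lparr>loc = init_lst n x,
     net = {(i, r, MRequest 0) | i r. i \<in> parties n - F \<and> r \<in> parties n}, dlv = {}\<rparr>"

inductive ithsreach :: "nat \<Rightarrow> nat \<Rightarrow> nat set \<Rightarrow> (nat \<Rightarrow> 'v) \<Rightarrow> 'v gst \<Rightarrow> bool"
  for n f F x where
  init: "ithsreach n f F x (ginit n F x)"
| local: "\<lbrakk>ithsreach n f F x g; i \<in> parties n - F; lstep n f i (loc g i) s' out\<rbrakk> \<Longrightarrow>
     ithsreach n f F x (g\<lparr>loc := (loc g)(i := s'),
                          net := net g \<union> {(i, r, m) | r m. (r, m) \<in> out}\<rparr>)"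
| deliver: "\<lbrakk>ithsreach n f F x g; (j, i, m) \<in> net g; (j, i, m) \<notin> dlv g; i \<in> parties n - F;
      decided (loc g i) = None; recv n f i j m (loc g i) = (s', out)\<rbrakk> \<Longrightarrow>
     ithsreach n f F x (g\<lparr>loc := (loc g)(i := s'),
                          net := net g \<union> {(i, r, m') | r m'. (r, m') \<in> out},
                          dlv := insert (j, i, m) (dlv g)\<rparr>)"
| byz: "\<lbrakk>ithsreach n f F x g; j \<in> F; r \<in> parties n\<rbrakk> \<Longrightarrow>
     ithsreach n f F x (g\<lparr>net := insert (j, r, m) (net g)\<rparr>)"

end

(*
  Every key1, key2, key3 or lock message for value a in view v is sent by an honest party only
  after it has received the corresponding message of the previous stage (echo, key1, key2, key3)
  for a in v from n - f parties. As n - f > f, one of those senders is honest, so descending the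
  stages from any honest key or lock message for a in v reaches an honest key1 message for a in v.
  Two honest key1 messages for a and b in view v are backed by two echo quorums of size n - f,
  which share more than f parties because 3f < n, hence an honest one. An honest party echoes in
  view v only the value of the single proposal it accepts in v, so a = b. Both facts about honest
  parties are proved together as an invariant of the reachable states.
*)
theory Submission
  imports Defs
begin

lemma finite_parties [simp]: "finite (parties n)"
  by (simp add: parties_def)

lemma card_parties [simp]: "card (parties n) = n"
  by (simp add: parties_def)

lemma quorum_intersection_card:
  assumes "A \<subseteq> parties n" and "B \<subseteq> parties n"
    and "n - f \<le> card A" and "n - f \<le> card B" and "3 * f < n"
  shows "f < card (A \<inter> B)"
proof -
  have "finite A" "finite B"
    using assms(1,2) by (auto intro: finite_subset[OF _ finite_parties])
  then have "card A + card B = card (A \<union> B) + card (A \<inter> B)"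
    by (rule card_Un_Int)
  moreover have "card (A \<union> B) \<le> n"
    using assms(1,2) card_mono[of "parties n" "A \<union> B"] by simp
  ultimately show ?thesis
    using assms(3-5) by linarith
qed

fun prev_stage :: "'v msg \<Rightarrow> 'v msg option" where
  "prev_stage (MKey1 a v) = Some (MEcho a v)"
| "prev_stage (MKey2 a v) = Some (MKey1 a v)"
| "prev_stage (MKey3 a v) = Some (MKey2 a v)"
| "prev_stage (MLock a v) = Some (MKey3 a v)"
| "prev_stage _ = None"

definition justified :: "nat \<Rightarrow> nat \<Rightarrow> (nat \<times> nat \<times> 'v msg) set \<Rightarrow> nat \<Rightarrow> 'v msg \<Rightarrow> bool" where
  "justified n f N i m \<longleftrightarrow>
     (\<forall>p. prev_stage m = Some p \<longrightarrow> n - f \<le> card {j \<in> parties n. (j, i, p) \<in> N})"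

lemma justified_mono:
  assumes "justified n f N i m" and "N \<subseteq> N'"
  shows "justified n f N' i m"
proof -
  have "card {j \<in> parties n. (j, i, p) \<in> N} \<le> card {j \<in> parties n. (j, i, p) \<in> N'}" for p
    using assms(2) by (intro card_mono) auto
  then show ?thesis
    using assms(1) unfolding justified_def by (meson order_trans)
qed

definition echo_allowed :: "'v lst \<Rightarrow> 'v \<Rightarrow> nat \<Rightarrow> bool" where
  "echo_allowed s a v \<longleftrightarrow> v = view s \<and> (\<exists>k. proposal s = Some (k, a))"

(* N stands for the set net g of all messages sent so far. *)
definition party_inv :: "nat \<Rightarrow> nat \<Rightarrow> nat \<Rightarrow> 'v lst \<Rightarrow> (nat \<times> nat \<times> 'v msg) set \<Rightarrow> bool" where
  "party_inv n f i s N \<longleftrightarrow>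
     (\<forall>j m. (j, m) \<in> rcvd s \<longrightarrow> (j, i, m) \<in> N) \<and>
     (\<forall>m \<in> queued s. justified n f N i m) \<and>
     (\<forall>r m. (i, r, m) \<in> N \<longrightarrow> justified n f N i m) \<and>
     (\<forall>w. awaiting s = Some w \<longrightarrow> echo_allowed s w (view s)) \<and>
     (\<forall>a v. MEcho a v \<in> queued s \<longrightarrow> echo_allowed s a v) \<and>
     (\<forall>a v r. (i, r, MEcho a v) \<in> N \<longrightarrow> v < view s \<or> echo_allowed s a v) \<and>
     (\<forall>a b v r r'. (i, r, MEcho a v) \<in> N \<longrightarrow> (i, r', MEcho b v) \<in> N \<longrightarrow> a = b)"

definition safe_outputs :: "nat \<Rightarrow> nat \<Rightarrow> (nat \<times> nat \<times> 'v msg) set \<Rightarrow> nat \<Rightarrow> 'v lst \<Rightarrow> (nat \<times> 'v msg) set \<Rightarrow> bool" where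
  "safe_outputs n f N i s out \<longleftrightarrow>
     (\<forall>r m. (r, m) \<in> out \<longrightarrow> justified n f N i m \<and> (\<forall>a v. m = MEcho a v \<longrightarrow> echo_allowed s a v))"

lemma party_inv_send:
  assumes inv: "party_inv n f i s N"
    and out: "safe_outputs n f N i s out"
  shows "party_inv n f i s (N \<union> {(i, r, m) | r m. (r, m) \<in> out})"
proof -
  have out_justified: "justified n f N i m" if "(r, m) \<in> out" for r m
    using out that by (simp add: safe_outputs_def)
  have out_echo: "echo_allowed s a v" if "(r, MEcho a v) \<in> out" for r a v
    using out that by (simp add: safe_outputs_def)
  define N' where "N' = N \<union> {(i, r, m) | r m. (r, m) \<in> out}"
  have grow: "N \<subseteq> N'" and sent: "(i, r, m) \<in> N' \<longleftrightarrow> (i, r, m) \<in> N \<or> (r, m) \<in> out" for r m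
    unfolding N'_def by blast+
  have mono: "justified n f N' i m" if "justified n f N i m" for m
    using that grow by (rule justified_mono)
  have old_echo: "v < view s \<or> echo_allowed s a v" if "(i, r, MEcho a v) \<in> N'" for r a v
    using that inv out_echo unfolding sent party_inv_def by blast
  have unique: "a = b" if "(i, r, MEcho a v) \<in> N'" "(i, r', MEcho b v) \<in> N'" for r r' a b v
  proof (cases "(r, MEcho a v) \<in> out \<or> (r', MEcho b v) \<in> out")
    case True
    then have "echo_allowed s a v \<or> echo_allowed s b v" using out_echo by blast
    then have "v = view s" by (auto simp: echo_allowed_def)
    then show ?thesis
      using old_echo[OF that(1)] old_echo[OF that(2)] by (auto simp: echo_allowed_def)
  next
    case False
    then show ?thesis using that inv unfolding sent party_inv_def by blast
  qed
  have "justified n f N' i m" if "(i, r, m) \<in> N'" for r m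
    using that inv out_justified mono unfolding sent party_inv_def by blast
  then show ?thesis
    unfolding party_inv_def N'_def[symmetric]
  proof (intro conjI)
    show "\<forall>j m. (j, m) \<in> rcvd s \<longrightarrow> (j, i, m) \<in> N'" using inv grow unfolding party_inv_def by blast
    show "Ball (queued s) (justified n f N' i)" using inv mono unfolding party_inv_def by blast
  qed (use inv old_echo unique in \<open>auto simp: party_inv_def\<close>)
qed

lemma cnt_le_sent:
  assumes "\<forall>j m. (j, m) \<in> rcvd s \<longrightarrow> (j, i, m) \<in> N"
  shows "cnt n s m \<le> card {j \<in> parties n. (j, i, m) \<in> N}"
  unfolding cnt_def using assms by (intro card_mono) auto

lemma lstep_preserves_party_inv:
  assumes "lstep n f i s s' out" and inv: "party_inv n f i s N"
  shows "party_inv n f i s' N \<and> safe_outputs n f N i s' out"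
proof -
  have "cnt n s p \<le> card {j \<in> parties n. (j, i, p) \<in> N}" for p
    using inv unfolding party_inv_def by (intro cnt_le_sent) simp
  with assms show ?thesis
    by (cases rule: lstep.cases)
      (auto 0 3 simp: party_inv_def justified_def echo_allowed_def safe_outputs_def to_all_def
        intro: order_trans)
qed

lemma party_inv_enter_view:
  assumes "party_inv n f i s N" and "view s < w"
  shows "party_inv n f i (fst (enter_view n s w)) N"
proof -
  have "v < w" if "(i, r, MEcho a v) \<in> N" for r a v
    using assms that unfolding party_inv_def echo_allowed_def by fastforce
  then show ?thesis
    using assms(1) unfolding party_inv_def by (simp add: enter_view_def justified_def)
qed

lemma snd_enter_view [simp]: "snd (enter_view n s w) = to_all n (MRequest w)"
  by (simp add: enter_view_def)

lemma abort_rule_effect: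
  assumes "abort_rule n f i j v s = (s', out)"
  obtains (same_view) h where "s' = s\<lparr>habort := h\<rparr>"
    and "\<forall>(r, m) \<in> out. \<exists>u. m = MAbort u \<or> m = MRequest u"
  | (new_view) h w where "view s < w" and "s' = fst (enter_view n (s\<lparr>habort := h\<rparr>) w)"
    and "\<forall>(r, m) \<in> out. \<exists>u. m = MAbort u \<or> m = MRequest u"
proof (cases "habort s j < v")
  case False
  then show ?thesis using assms same_view[of "habort s"] by (simp add: abort_rule_def)
next
  case True
  define h1 where "h1 = (habort s)(j := v)"
  define u where "u = kth_largest h1 n (f + 1)"
  define h2 where "h2 = (if u > h1 i then h1(i := u) else h1)"
  define w where "w = kth_largest h2 n (n - f)"
  have aborts: "\<forall>(r, m) \<in> (if u > h1 i then to_all n (MAbort u) else {}).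
      \<exists>u. m = MAbort u \<or> m = MRequest u"
    by (auto simp: to_all_def)
  have "abort_rule n f i j v s =
      (if w \<ge> view s then (fst (enter_view n (s\<lparr>habort := h2\<rparr>) (w + 1)),
          (if u > h1 i then to_all n (MAbort u) else {}) \<union> to_all n (MRequest (w + 1)))
       else (s\<lparr>habort := h2\<rparr>, if u > h1 i then to_all n (MAbort u) else {}))"
    using True unfolding abort_rule_def h1_def u_def h2_def w_def Let_def by simp
  then show ?thesis
    using assms aborts same_view[of h2] new_view[of "w + 1" h2]
    by (auto simp: to_all_def split: if_splits)
qed

lemma safe_outputs_empty [simp]: "safe_outputs n f N i s {}"
  by (simp add: safe_outputs_def)

lemma safe_outputs_control:
  assumes "\<forall>(r, m) \<in> out. \<exists>u. m = MAbort u \<or> m = MRequest u"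
  shows "safe_outputs n f N i s out"
  using assms by (fastforce simp: safe_outputs_def justified_def)

lemma party_inv_unaffected [simp]:
  "party_inv n f i (s\<lparr>habort := a\<rparr>) N \<longleftrightarrow> party_inv n f i s N"
  "party_inv n f i (s\<lparr>hreq := h\<rparr>) N \<longleftrightarrow> party_inv n f i s N"
  "party_inv n f i (s\<lparr>done_rcvd := D\<rparr>) N \<longleftrightarrow> party_inv n f i s N"
  "party_inv n f i (s\<lparr>suggest_from := S\<rparr>) N \<longleftrightarrow> party_inv n f i s N"
  "party_inv n f i (s\<lparr>key2_proofs := K\<rparr>) N \<longleftrightarrow> party_inv n f i s N"
  "party_inv n f i (s\<lparr>pend_sugg := P\<rparr>) N \<longleftrightarrow> party_inv n f i s N"
  "party_inv n f i (s\<lparr>suggestions := G\<rparr>) N \<longleftrightarrow> party_inv n f i s N"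
  "party_inv n f i (s\<lparr>proof_from := Q\<rparr>) N \<longleftrightarrow> party_inv n f i s N"
  "party_inv n f i (s\<lparr>proofs := R\<rparr>) N \<longleftrightarrow> party_inv n f i s N"
  by (simp_all add: party_inv_def echo_allowed_def)

lemma abort_rule_preserves_party_inv:
  assumes "abort_rule n f i j v s = (s', out)" and "party_inv n f i s N"
  shows "party_inv n f i s' N \<and> safe_outputs n f N i s' out"
  using assms(1)
proof (cases rule: abort_rule_effect)
  case (same_view h)
  then show ?thesis using assms(2) by (auto intro: safe_outputs_control)
next
  case (new_view h w)
  then show ?thesis using assms(2) by (auto intro: safe_outputs_control party_inv_enter_view)
qed

lemma party_inv_rcvd:
  assumes "party_inv n f i s N" and "(j, i, m) \<in> N"
  shows "party_inv n f i (s\<lparr>rcvd := insert (j, m) (rcvd s)\<rparr>) N"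
  using assms unfolding party_inv_def echo_allowed_def by simp

lemma party_inv_accept_proposal:
  assumes "party_inv n f i s N" and "proposal s = None"
  shows "party_inv n f i (s\<lparr>proposal := Some (k, w)\<rparr>) N"
    and "party_inv n f i
      (s\<lparr>proposal := Some (k, w), queued := insert (MEcho w (view s)) (queued s)\<rparr>) N"
    and "party_inv n f i (s\<lparr>proposal := Some (k, w), awaiting := Some w\<rparr>) N"
  using assms unfolding party_inv_def echo_allowed_def by (auto simp: justified_def)

lemma recv_preserves_party_inv:
  assumes "(j, i, m) \<in> N" and "recv n f i j m s = (s', out)" and "party_inv n f i s N"
  shows "party_inv n f i s' N \<and> safe_outputs n f N i s' out"
proof (cases m)
  case (MAbort v)
  then show ?thesis using assms abort_rule_preserves_party_inv by (simp add: recv_def)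
next
  case (MPropose k w v)
  then show ?thesis
    using assms by (auto simp: recv_def Let_def party_inv_accept_proposal split: if_splits)
qed (use assms in \<open>auto simp: recv_def Let_def party_inv_rcvd split: if_splits\<close>)

lemma party_inv_others_send:
  assumes "party_inv n f i s N" and "N \<subseteq> N'" and "\<And>r m. (i, r, m) \<in> N' \<Longrightarrow> (i, r, m) \<in> N"
  shows "party_inv n f i s N'"
proof -
  have sent_by_i: "(i, r, m) \<in> N' \<longleftrightarrow> (i, r, m) \<in> N" for r m
    using assms(2,3) by blast
  have "justified n f N' i m" if "justified n f N i m" for m
    using that assms(2) by (rule justified_mono)
  then show ?thesis
    using assms(1,2) unfolding party_inv_def sent_by_i by (meson subsetD)
qed

lemma reachable_party_inv:
  assumes "ithsreach n f F x g" and "i \<in> parties n - F"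
  shows "party_inv n f i (loc g i) (net g)"
  using assms
proof (induction arbitrary: i)
  case init
  then show ?case
    by (auto simp: ginit_def init_lst_def enter_view_def party_inv_def justified_def)
next
  case (local g i' s' out)
  show ?case
  proof (cases "i = i'")
    case True
    have "party_inv n f i' s' (net g) \<and> safe_outputs n f (net g) i' s' out"
      using local.hyps(3) local.IH[OF local.hyps(2)] by (rule lstep_preserves_party_inv)
    then show ?thesis
      using True by (simp add: party_inv_send)
  next
    case False
    then show ?thesis
      using local.IH[OF local.prems] by (auto intro: party_inv_others_send)
  qed
next
  case (deliver g j i' m s' out)
  show ?case
  proof (cases "i = i'")
    case True
    have "party_inv n f i' s' (net g) \<and> safe_outputs n f (net g) i' s' out"
      using deliver.hyps(2,6) deliver.IH[OF deliver.hyps(4)] by (rule recv_preserves_party_inv)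
    then show ?thesis
      using True by (simp add: party_inv_send)
  next
    case False
    then show ?thesis
      using deliver.IH[OF deliver.prems] by (auto intro: party_inv_others_send)
  qed
next
  case (byz g j r m)
  then show ?case by (auto intro: party_inv_others_send)
qed

locale iths_execution =
  fixes n f :: nat and F :: "nat set" and x :: "nat \<Rightarrow> 'v" and g :: "'v gst"
  assumes resilience: "3 * f < n"
    and faulty_parties: "F \<subseteq> parties n"
    and few_faulty: "card F \<le> f"
    and reachable: "ithsreach n f F x g"
begin

lemma not_subset_faulty:
  assumes "f < card A"
  shows "\<not> A \<subseteq> F"
  using card_mono[OF finite_subset[OF faulty_parties finite_parties], of A] few_faulty assms
  by linarith

lemma honest_sent_justified:
  assumes "i \<in> parties n - F" and "(i, r, m) \<in> net g"
  shows "justified n f (net g) i m"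
  using reachable_party_inv[OF reachable assms(1)] assms(2) unfolding party_inv_def by blast

lemma honest_echo_unique:
  assumes "k \<in> parties n - F" and "(k, r, MEcho a v) \<in> net g" and "(k, r', MEcho b v) \<in> net g"
  shows "a = b"
  using reachable_party_inv[OF reachable assms(1)] assms(2,3) unfolding party_inv_def by blast

lemma honest_sent_prev_stage:
  assumes "i \<in> parties n - F" and "(i, r, m) \<in> net g" and "prev_stage m = Some p"
  shows "\<exists>k \<in> parties n - F. (k, i, p) \<in> net g"
proof -
  have "n - f \<le> card {k \<in> parties n. (k, i, p) \<in> net g}"
    using honest_sent_justified[OF assms(1,2)] assms(3) unfolding justified_def by blast
  then have "\<not> {k \<in> parties n. (k, i, p) \<in> net g} \<subseteq> F"
    using resilience by (intro not_subset_faulty) linarith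
  then show ?thesis
    by blast
qed

lemma honest_key1_agree:
  assumes "i \<in> parties n - F" and "(i, r, MKey1 a v) \<in> net g"
    and "j \<in> parties n - F" and "(j, r', MKey1 b v) \<in> net g"
  shows "a = b"
proof -
  have "n - f \<le> card {k \<in> parties n. (k, i, MEcho a v) \<in> net g}"
    and "n - f \<le> card {k \<in> parties n. (k, j, MEcho b v) \<in> net g}"
    using honest_sent_justified[OF assms(1,2)] honest_sent_justified[OF assms(3,4)]
    by (simp_all add: justified_def)
  then have "\<not> {k \<in> parties n. (k, i, MEcho a v) \<in> net g}
      \<inter> {k \<in> parties n. (k, j, MEcho b v) \<in> net g} \<subseteq> F"
    using resilience by (intro not_subset_faulty quorum_intersection_card) auto
  then obtain k where "k \<in> parties n - F" "(k, i, MEcho a v) \<in> net g" "(k, j, MEcho b v) \<in> net g"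
    by blast
  then show ?thesis
    by (rule honest_echo_unique)
qed

lemma honest_key_msg_imp_honest_key1:
  assumes "i \<in> parties n - F" and "(i, r, m) \<in> net g"
    and "m \<in> {MKey1 a v, MKey2 a v, MKey3 a v, MLock a v}"
  shows "\<exists>k \<in> parties n - F. \<exists>r. (k, r, MKey1 a v) \<in> net g"
proof -
  have down: "\<exists>k \<in> parties n - F. \<exists>r. (k, r, p) \<in> net g"
    if "\<exists>k \<in> parties n - F. \<exists>r. (k, r, m) \<in> net g" and "prev_stage m = Some p" for m p
    using that honest_sent_prev_stage by blast
  have key1: "\<exists>k \<in> parties n - F. \<exists>r. (k, r, MKey1 a v) \<in> net g"
    if "\<exists>k \<in> parties n - F. \<exists>r. (k, r, MKey2 a v) \<in> net g"
    using down[OF that] by simp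
  have key2: "\<exists>k \<in> parties n - F. \<exists>r. (k, r, MKey2 a v) \<in> net g"
    if "\<exists>k \<in> parties n - F. \<exists>r. (k, r, MKey3 a v) \<in> net g"
    using down[OF that] by simp
  have key3: "\<exists>k \<in> parties n - F. \<exists>r. (k, r, MKey3 a v) \<in> net g"
    if "\<exists>k \<in> parties n - F. \<exists>r. (k, r, MLock a v) \<in> net g"
    using down[OF that] by simp
  have "\<exists>k \<in> parties n - F. \<exists>r. (k, r, m) \<in> net g"
    using assms(1,2) by blast
  with assms(3) show ?thesis
    using key1 key2 key3 by blast
qed

end

theorem corollary2p4:
  fixes n f :: nat and F :: "nat set" and x :: "nat \<Rightarrow> 'v" and g :: "'v gst"
  assumes "3 * f < n" and "F \<subseteq> parties n" and "card F \<le> f"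
    and "ithsreach n f F x g"
    and "i \<in> parties n - F" and "j \<in> parties n - F"
    and "(i, r, m) \<in> net g" and "m \<in> {MKey1 val v, MKey2 val v, MKey3 val v, MLock val v}"
    and "(j, r', m') \<in> net g" and "m' \<in> {MKey1 val' v, MKey2 val' v, MKey3 val' v, MLock val' v}"
  shows "val = val'"
proof -
  interpret iths_execution n f F x g
    using assms(1-4) by unfold_locales
  obtain k q where "k \<in> parties n - F" "(k, q, MKey1 val v) \<in> net g"
    using honest_key_msg_imp_honest_key1[OF assms(5,7,8)] by blast
  moreover obtain k' q' where "k' \<in> parties n - F" "(k', q', MKey1 val' v) \<in> net g"
    using honest_key_msg_imp_honest_key1[OF assms(6,9,10)] by blast
  ultimately show ?thesis
    by (rule honest_key1_agree)
qed

end
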